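(* Let $U$ and $V$ be finite-dimensional vector spaces over a field $\mathbb{K}$, and $\mathcal{S}$ a linear subspace of $\mathcal{L}(U,V)$ with $\operatorname{codim}_{\mathcal{L}(U,V)}\mathcal{S}\leq 2\dim V-3$. Assume that there is a nonzero $x\in U$ with $\dim\mathcal{S}x\leq 1$, and let $F:\mathcal{S}\to V$ be a range-compatible group homomorphism. Then: (a) if $\mathcal{S}x=\{0\}$, $F$ is local; (b) if $\mathcal{S}x\neq\{0\}$, $F$ is the sum of a local map and of the map $s\mapsto\alpha(s(x))$ for some endomorphism $\alpha$ of the additive group $\mathcal{S}x$; (c) if $F$ is linear, then $F$ is local.
   Context: $\mathcal{S}x:=\{s(x):s\in\mathcal{S}\}$. A map $F:\mathcal{S}\to V$ is range-compatible when $F(s)\in\operatorname{im}s$ for all $s\in\mathcal{S}$, and local when there exists $y\in U$ with $F(s)=s(y)$ for all $s\in\mathcal{S}$. *)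

theory Defs
  imports "HOL-Analysis.Analysis" "HOL-Library.Function_Algebras"
begin

text \<open>Finite-dimensional spaces over a field 'k are modelled as 'k^'n (U) and 'k^'m (V).
  Maps U to V are functions; the vector-space structure on functions is pointwise.\<close>

definition fscale :: "'k::field \<Rightarrow> ('a \<Rightarrow> 'k^'m) \<Rightarrow> ('a \<Rightarrow> 'k^'m)" where
  "fscale c f = (\<lambda>u. c *s f u)"

interpretation funvs: vector_space "fscale :: 'k::field \<Rightarrow> ('a \<Rightarrow> 'k^'m) \<Rightarrow> ('a \<Rightarrow> 'k^'m)"
  by unfold_locales (auto simp: fscale_def fun_eq_iff vec_eq_iff algebra_simps)

definition Lin :: "('k::field^'n \<Rightarrow> 'k^'m) set" where
  "Lin = {f. Vector_Spaces.linear (*s) (*s) f}"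

definition evalset :: "('a \<Rightarrow> 'b) set \<Rightarrow> 'a \<Rightarrow> 'b set" where
  "evalset S x = (\<lambda>s. s x) ` S"

definition range_compatible :: "('a \<Rightarrow> 'b) set \<Rightarrow> (('a \<Rightarrow> 'b) \<Rightarrow> 'b) \<Rightarrow> bool" where
  "range_compatible S F \<longleftrightarrow> (\<forall>s\<in>S. F s \<in> range s)"

definition is_local :: "('a \<Rightarrow> 'b) set \<Rightarrow> (('a \<Rightarrow> 'b) \<Rightarrow> 'b) \<Rightarrow> bool" where
  "is_local S F \<longleftrightarrow> (\<exists>y. \<forall>s\<in>S. F s = s y)"

end

theory Submission
  imports Defs
begin

text \<open>
  Fix a basis of \<open>U\<close> containing \<open>x\<close> and identify a linear map with the family of its
  values on the basis (its columns); \<open>S\<close> becomes a space of families in \<open>V\<^sup>n\<close> of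
  codimension at most \<open>2 dim V - 3\<close>.

  The engine is an avoidance lemma: if \<open>T\<close> has codimension less than \<open>dim V\<close> among the
  families with values in \<open>V\<close>, then every translate \<open>f + T\<close> contains a family whose columns
  do not span a given nonzero \<open>w\<close>. Induct on the number of columns: if a column of \<open>f + T\<close>
  can be made zero, drop it; otherwise make it a vector off the line of \<open>w\<close> and work modulo it.

  By induction on the number of columns, a range-compatible additive map on a space of
  codimension at most \<open>dim V - 2\<close> is then a fixed linear combination of the columns: it is
  one on each kernel of a column evaluation, these combinations agree, and the remaining
  difference takes values on the line of every single column, hence vanishes.

  As \<open>dim (S x) \<le> 1\<close>, the maps in \<open>S\<close> vanishing at \<open>x\<close> form such a space in the remaining
  columns, so \<open>F s = s y\<close> for them. The avoidance lemma shows once more that \<open>F s - s y\<close> always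
  lies on the line of \<open>s x\<close>, so it only depends on \<open>s x\<close>: this gives (b), and for linear
  \<open>F\<close> it is a fixed multiple of \<open>s x\<close>, which gives (c).
\<close>

lemma fscale_apply: "fscale c f u = c *s f u"
  by (simp add: fscale_def)

lemma sum_fun_apply: "(\<Sum>a\<in>A. f a) x = (\<Sum>a\<in>A. f a x)"
  by (induction A rule: infinite_finite_induct) auto

definition unit_family :: "'n \<Rightarrow> 'k::field^'m \<Rightarrow> 'n \<Rightarrow> 'k^'m" where
  "unit_family i v = (\<lambda>j. if j = i then v else 0)"

definition family_basis :: "('n::finite \<Rightarrow> 'k::field^'m) set" where
  "family_basis = range (\<lambda>p. unit_family (fst p) (axis (snd p) 1))"

lemma family_eq_sum_family_basis:
  fixes f :: "'n::finite \<Rightarrow> 'k::field^'m"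
  shows "f = (\<Sum>p\<in>UNIV. fscale (f (fst p) $ snd p) (unit_family (fst p) (axis (snd p) 1)))"
proof (rule ext, rule vec_eq_iff[THEN iffD2], intro allI)
  fix u l
  have "(\<Sum>p\<in>UNIV. fscale (f (fst p) $ snd p) (unit_family (fst p) (axis (snd p) (1::'k)))) u $ l
      = (\<Sum>p\<in>UNIV. if p = (u, l) then f u $ l else 0)"
    unfolding sum_fun_apply sum_component
    by (rule sum.cong) (auto simp: unit_family_def axis_def fscale_apply)
  then show "f u $ l = (\<Sum>p\<in>UNIV. fscale (f (fst p) $ snd p) (unit_family (fst p) (axis (snd p) 1))) u $ l"
    by simp
qed

lemma span_family_basis: "funvs.span (family_basis :: ('n::finite \<Rightarrow> 'k::field^'m) set) = UNIV"
proof -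
  have "f \<in> funvs.span family_basis" for f :: "'n \<Rightarrow> 'k^'m"
    by (subst family_eq_sum_family_basis)
      (intro funvs.span_sum funvs.span_scale funvs.span_base; simp add: family_basis_def)
  then show ?thesis by auto
qed

lemma unit_family_axis_eq_iff:
  "unit_family i (axis j (1::'k::field)) = unit_family i' (axis j' 1) \<longleftrightarrow> i = i' \<and> j = j'"
proof
  assume "unit_family i (axis j (1::'k)) = unit_family i' (axis j' 1)"
  then have "unit_family i (axis j (1::'k)) i $ j = unit_family i' (axis j' 1) i $ j" by simp
  then show "i = i' \<and> j = j'"
    by (auto simp: unit_family_def axis_def split: if_splits)
qed auto

lemma finite_family_basis: "finite (family_basis :: ('n::finite \<Rightarrow> 'k::field^'m) set)"
  by (simp add: family_basis_def)

lemma independent_family_basis: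
  "funvs.independent (family_basis :: ('n::finite \<Rightarrow> 'k::field^'m) set)"
proof -
  have "c v = 0" if sum0: "(\<Sum>w\<in>family_basis. fscale (c w) w) = (0 :: 'n \<Rightarrow> 'k^'m)"
    and v: "v \<in> family_basis" for c v
  proof -
    obtain i j where v_eq: "v = unit_family i (axis j 1)" using v by (auto simp: family_basis_def)
    have "0 = (\<Sum>w\<in>family_basis. fscale (c w) w) i $ j" using sum0 by simp
    also have "\<dots> = (\<Sum>w\<in>family_basis. if w = v then c w else 0)"
      unfolding sum_fun_apply sum_component
      by (rule sum.cong) (auto simp: family_basis_def v_eq unit_family_axis_eq_iff,
          auto simp: unit_family_def axis_def fscale_apply split: if_splits)
    also have "\<dots> = c v" using v by (simp add: finite_family_basis)
    finally show "c v = 0" by simp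
  qed
  then show ?thesis by (auto simp: funvs.dependent_finite[OF finite_family_basis])
qed

interpretation family: finite_dimensional_vector_space
  "fscale :: 'k::field \<Rightarrow> ('n::finite \<Rightarrow> 'k^'m) \<Rightarrow> _" family_basis
  by unfold_locales (fact finite_family_basis independent_family_basis span_family_basis)+

lemma (in finite_dimensional_vector_space) span_Int_span_Diff:
  assumes "independent C" "B \<subseteq> C"
  shows "span B \<inter> span (C - B) \<subseteq> {0}"
proof -
  have C: "finite C" using assms(1) finiteI_independent by blast
  have B: "independent B" "independent (C - B)" "finite B"
    using assms independent_mono finite_subset[OF assms(2) C] by auto
  have "{x + y |x y. x \<in> span B \<and> y \<in> span (C - B)} = span C"
    using assms(2) by (simp add: span_Un[symmetric] Un_absorb1 Un_Diff_cancel)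
  then have "dim (span C) + dim (span B \<inter> span (C - B)) = dim (span B) + dim (span (C - B))"
    using dim_sums_Int[of "span B" "span (C - B)"] by simp
  moreover have "dim (span C) = card C" "dim (span B) = card B" "dim (span (C - B)) = card (C - B)"
    using assms(1) B by (simp_all add: dim_eq_card_independent)
  moreover have "card C = card B + card (C - B)"
    using card_Diff_subset[OF B(3) assms(2)] card_mono[OF C assms(2)] by linarith
  ultimately show ?thesis by (simp flip: dim_eq_0)
qed

lemma (in finite_dimensional_vector_space_pair_1) rank_nullity:
  assumes f: "Vector_Spaces.linear s1 s2 f" and A: "vs1.subspace A"
  shows "vs1.dim A = vs1.dim {x\<in>A. f x = 0} + vs2.dim (f ` A)"
proof -
  interpret f: Vector_Spaces.linear s1 s2 f by fact
  define K where "K = {x\<in>A. f x = 0}"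
  obtain B where B: "B \<subseteq> K" "vs1.independent B" "K \<subseteq> vs1.span B" "card B = vs1.dim K"
    using vs1.basis_exists by blast
  obtain C where C: "B \<subseteq> C" "C \<subseteq> A" "vs1.independent C" "A \<subseteq> vs1.span C"
    using vs1.maximal_independent_subset_extend[of B A] B by (auto simp: K_def)
  have fin: "finite C" "finite B" using C(1,3) vs1.finiteI_independent finite_subset by blast+
  have "inj_on f (vs1.span (C - B))"
  proof (rule f.inj_on_iff_eq_0[THEN iffD2, OF vs1.subspace_span], intro ballI impI)
    fix x assume x: "x \<in> vs1.span (C - B)" "f x = 0"
    have "vs1.span (C - B) \<subseteq> A"
      using C(2) A by (meson Diff_subset order_trans vs1.span_minimal)
    then have "x \<in> vs1.span B" using x B(3) by (auto simp: K_def)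
    then show "x = 0" using x(1) vs1.span_Int_span_Diff[OF C(3,1)] by blast
  qed
  then have "vs2.dim (f ` (C - B)) = card (C - B)"
    using f.linear_axioms vs1.independent_mono[OF C(3)]
    by (simp add: dim_image_eq vs1.dim_eq_card_independent)
  moreover have "vs2.span (f ` (C - B)) = vs2.span (f ` A)"
  proof (rule vs2.span_eq[THEN iffD2], rule conjI)
    show "f ` (C - B) \<subseteq> vs2.span (f ` A)" using C(2) by (auto intro: vs2.span_base)
    have "f c \<in> vs2.span (f ` (C - B))" if "c \<in> C" for c
      using that B(1) vs2.span_zero by (cases "c \<in> B") (auto simp: K_def intro: vs2.span_base)
    then have "f ` C \<subseteq> vs2.span (f ` (C - B))" by blast
    then have "vs2.span (f ` C) \<subseteq> vs2.span (f ` (C - B))"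
      by (rule vs2.span_minimal[OF _ vs2.subspace_span])
    then show "f ` A \<subseteq> vs2.span (f ` (C - B))"
      using C(4) f.span_image[of C] by blast
  qed
  ultimately have "vs2.dim (f ` A) = card (C - B)" by (metis vs2.dim_span)
  moreover have "vs1.dim A = card C" using vs1.basis_card_eq_dim[OF C(2,4,3)] by simp
  moreover have "card C = card B + card (C - B)"
    using card_Diff_subset[OF fin(2) C(1)] card_mono[OF fin(1) C(1)] by linarith
  ultimately show ?thesis using B(4) by (simp add: K_def)
qed

interpretation family_vec: finite_dimensional_vector_space_pair_1
  "fscale :: 'k::field \<Rightarrow> ('n::finite \<Rightarrow> 'k^'m) \<Rightarrow> _" family_basis "(*s) :: 'k \<Rightarrow> 'k^'m2 \<Rightarrow> _" ..

interpretation fun_vec: vector_space_pair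
  "fscale :: 'k::field \<Rightarrow> ('a \<Rightarrow> 'k^'m) \<Rightarrow> _" "(*s) :: 'k \<Rightarrow> 'k^'m \<Rightarrow> _" ..

interpretation family_fun: finite_dimensional_vector_space_pair_1
  "fscale :: 'k::field \<Rightarrow> ('n::finite \<Rightarrow> 'k^'m) \<Rightarrow> _" family_basis "fscale :: 'k \<Rightarrow> ('a \<Rightarrow> 'k^'m2) \<Rightarrow> _" ..

text \<open>A linear map on \<open>U\<close> is encoded by the family of its values on a basis indexed by \<open>'n\<close>.\<close>

definition families :: "('k::field^'m) set \<Rightarrow> 'n set \<Rightarrow> ('n \<Rightarrow> 'k^'m) set" where
  "families V J = {f. (\<forall>i. f i \<in> V) \<and> (\<forall>i. i \<notin> J \<longrightarrow> f i = 0)}"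

lemma families_UNIV_UNIV [simp]: "families UNIV UNIV = UNIV"
  by (simp add: families_def)

lemma subspace_families: "vec.subspace V \<Longrightarrow> funvs.subspace (families V J)"
  by (auto simp: families_def funvs.subspace_def vec.subspace_def fscale_def)

lemma linear_eval: "Vector_Spaces.linear fscale (*s) (\<lambda>f. f i)"
  by (auto simp: Vector_Spaces.linear_iff funvs.vector_space_axioms vec.vector_space_axioms fscale_apply)

lemma subspace_eval_image:
  fixes T :: "('a \<Rightarrow> 'k::field^'m) set"
  shows "funvs.subspace T \<Longrightarrow> vec.subspace ((\<lambda>t. t i) ` T)"
  by (rule fun_vec.linear_subspace_image[OF linear_eval])

lemma subspace_evalset: "funvs.subspace S \<Longrightarrow> vec.subspace (evalset S x)"
  unfolding evalset_def by (rule subspace_eval_image)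

lemma subspace_eval_kernel: "funvs.subspace T \<Longrightarrow> funvs.subspace {t\<in>T. t i = 0}"
  by (auto simp: funvs.subspace_def fscale_apply)

lemma dim_eval_kernel:
  fixes T :: "('n::finite \<Rightarrow> 'k::field^'m) set"
  assumes "funvs.subspace T"
  shows "funvs.dim T = funvs.dim {t\<in>T. t i = 0} + vec.dim ((\<lambda>t. t i) ` T)"
  by (rule family_vec.rank_nullity[OF linear_eval assms])

lemma kernel_eval_in_families:
  "S \<subseteq> families V J \<Longrightarrow> {s\<in>S. s i = 0} \<subseteq> families V (J - {i})"
  by (auto simp: families_def)

lemma dim_families:
  fixes J :: "'n::finite set"
  assumes V: "vec.subspace (V :: ('k::field^'m) set)"
  shows "funvs.dim (families V J) = card J * vec.dim V"
proof (induction J rule: finite_induct[OF finite])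
  case 1
  have "families V ({}::'n set) = {0}" using V by (auto simp: families_def vec.subspace_0)
  then show ?case by simp
next
  case (2 i J)
  have "{f \<in> families V (insert i J). f i = 0} = families V J"
    using 2(2) by (auto simp: families_def)
  moreover have "(\<lambda>f. f i) ` families V (insert i J) = V"
  proof (intro equalityI subsetI)
    fix v assume "v \<in> V"
    then have "unit_family i v \<in> families V (insert i J)"
      using V by (auto simp: families_def unit_family_def vec.subspace_0)
    then show "v \<in> (\<lambda>f. f i) ` families V (insert i J)"
      by (rule rev_image_eqI) (simp add: unit_family_def)
  qed (auto simp: families_def)
  ultimately show ?case
    using dim_eval_kernel[OF subspace_families[OF V], of "insert i J" i] 2 by simp
qed

lemma dim_families_remove:
  fixes J :: "'n::finite set"
  assumes "vec.subspace (V :: ('k::field^'m) set)" "i \<in> J"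
  shows "funvs.dim (families V J) = funvs.dim (families V (J - {i})) + vec.dim V"
proof -
  have "card J = Suc (card (J - {i}))" by (metis card_Suc_Diff1 finite assms(2))
  then show ?thesis by (simp only: dim_families[OF assms(1)] mult_Suc add.commute)
qed

lemma vec_dim_le_card: "vec.dim (E :: ('k::field^'m) set) \<le> CARD('m)"
  using vec.dim_subset[of E UNIV] by (simp add: vec_dim_card card_cart_basis)

lemma dim_families_UNIV_remove:
  fixes J :: "'n::finite set"
  assumes "i \<in> J"
  shows "funvs.dim (families UNIV J :: ('n \<Rightarrow> 'k::field^'m) set)
    = funvs.dim (families UNIV (J - {i}) :: ('n \<Rightarrow> 'k^'m) set) + CARD('m)"
  using dim_families_remove[OF vec.subspace_UNIV assms] by (simp add: vec_dim_card card_cart_basis)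

lemma codim_kernel_eval_le:
  fixes S :: "('n::finite \<Rightarrow> 'k::field^'m) set"
  assumes S: "funvs.subspace S" and i: "i \<in> J"
    and codim: "funvs.dim (families UNIV J :: ('n \<Rightarrow> 'k^'m) set) + 2 \<le> funvs.dim S + CARD('m)"
  shows "funvs.dim (families UNIV (J - {i}) :: ('n \<Rightarrow> 'k^'m) set) + 2
    \<le> funvs.dim {s\<in>S. s i = 0} + CARD('m)"
  using dim_eval_kernel[OF S, of i] vec_dim_le_card[of "(\<lambda>s. s i) ` S"]
    dim_families_UNIV_remove[OF i, where 'k='k and 'm='m] codim
  by simp

lemma dim_eval_image_ge_2:
  fixes S :: "('n::finite \<Rightarrow> 'k::field^'m) set"
  assumes S: "funvs.subspace S" "S \<subseteq> families UNIV J" and k: "k \<in> J"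
    and codim: "funvs.dim (families UNIV J :: ('n \<Rightarrow> 'k^'m) set) + 2 \<le> funvs.dim S + CARD('m)"
  shows "2 \<le> vec.dim ((\<lambda>s. s k) ` S)"
proof -
  have "funvs.dim {s\<in>S. s k = 0} \<le> funvs.dim (families UNIV (J - {k}) :: ('n \<Rightarrow> 'k^'m) set)"
    using kernel_eval_in_families[OF S(2)] by (rule family.dim_subset)
  then show ?thesis
    using dim_eval_kernel[OF S(1), of k] dim_families_UNIV_remove[OF k, where 'k='k and 'm='m] codim
    by simp
qed

lemma sum_remove_zero_term:
  fixes s :: "'n::finite \<Rightarrow> 'k::field^'m"
  assumes "s i = 0"
  shows "(\<Sum>j\<in>J. c j *s s j) = (\<Sum>j\<in>J - {i}. c j *s s j)"
  using assms by (cases "i \<in> J") (simp_all add: sum.remove)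

lemma span_image_remove_zero:
  fixes s :: "'n \<Rightarrow> 'k::field^'m"
  assumes "s i = 0"
  shows "vec.span (s ` J) = vec.span (s ` (J - {i}))"
proof -
  have "s ` J \<subseteq> insert 0 (s ` (J - {i}))" using assms by auto
  then have "vec.span (s ` J) \<subseteq> vec.span (s ` (J - {i}))"
    by (metis vec.span_insert_0 vec.span_mono)
  moreover have "vec.span (s ` (J - {i})) \<subseteq> vec.span (s ` J)" by (intro vec.span_mono) auto
  ultimately show ?thesis by blast
qed

lemma in_span_singleton_swap:
  fixes u w :: "'k::field^'m"
  assumes "w \<in> vec.span {u}" "w \<noteq> 0"
  shows "u \<in> vec.span {w}"
proof -
  obtain k where k: "w = k *s u" using assms(1) by (auto simp: vec.span_singleton)
  then have "k \<noteq> 0" using assms(2) by auto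
  then have "u = inverse k *s w" using k by simp
  then show ?thesis by (simp add: vec.span_scale vec.span_base)
qed

lemma span_singleton_Int_eq_zero:
  fixes u v x :: "'k::field^'m"
  assumes "v \<notin> vec.span {u}" "x \<in> vec.span {u}" "x \<in> vec.span {v}"
  shows "x = 0"
proof (rule ccontr)
  assume "x \<noteq> 0"
  with assms(3) have "v \<in> vec.span {x}" by (rule in_span_singleton_swap)
  also have "vec.span {x} \<subseteq> vec.span {u}" using assms(2) by (simp add: vec.span_minimal)
  finally show False using assms(1) by contradiction
qed

lemma scale_coefficients_eq:
  fixes u v :: "'k::field^'m"
  assumes u: "u \<noteq> 0" and v: "v \<notin> vec.span {u}" and uv: "a *s u + b *s v \<in> vec.span {u + v}"
  shows "a = b"
proof -
  obtain d where "a *s u + b *s v = d *s (u + v)" using uv by (auto simp: vec.span_singleton)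
  then have eq: "(a - d) *s u = (d - b) *s v"
    by (simp add: algebra_simps vec.scale_left_diff_distrib)
  have "(a - d) *s u = 0"
  proof (rule span_singleton_Int_eq_zero[OF v])
    show "(a - d) *s u \<in> vec.span {u}" by (intro vec.span_scale vec.span_base) simp
    show "(a - d) *s u \<in> vec.span {v}" unfolding eq by (intro vec.span_scale vec.span_base) simp
  qed
  moreover have "v \<noteq> 0" using v vec.span_zero by metis
  ultimately show ?thesis using eq u by simp
qed

lemma not_subset_span_singleton:
  fixes E :: "('k::field^'m) set"
  assumes "2 \<le> vec.dim E"
  shows "\<not> E \<subseteq> vec.span {c}"
proof
  assume "E \<subseteq> vec.span {c}"
  then have "vec.dim E \<le> vec.dim (vec.span {c})" by (rule vec.dim_subset)
  also have "\<dots> \<le> 1" by simp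
  finally show False using assms by simp
qed

lemma exists_translate_notin_span_singleton:
  fixes E :: "('k::field^'m) set"
  assumes "vec.subspace E" "\<not> E \<subseteq> vec.span {c}"
  shows "\<exists>e\<in>E. v + e \<notin> vec.span {c}"
proof (cases "v \<in> vec.span {c}")
  case True
  obtain e where "e \<in> E" "e \<notin> vec.span {c}" using assms(2) by auto
  then show ?thesis using True vec.span_add_eq by blast
next
  case False
  then show ?thesis using vec.subspace_0[OF assms(1)] by force
qed

lemma exists_translate_zero_or_not_spanning:
  fixes E :: "('k::field^'m) set"
  assumes E: "vec.subspace E" "E \<noteq> {0}" and w: "w \<noteq> 0"
  shows "\<exists>e\<in>E. v + e = 0 \<or> w \<notin> vec.span {v + e}"
proof (rule ccontr)
  assume "\<not> ?thesis"
  then have in_w: "v + e \<in> vec.span {w}" and nz: "v + e \<noteq> 0" if "e \<in> E" for e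
    using that in_span_singleton_swap[OF _ w] by blast+
  obtain e where e: "e \<in> E" "e \<noteq> 0" using E vec.subspace_0 by blast
  have "e = (v + e) - (v + 0)" by simp
  also have "\<dots> \<in> vec.span {w}" using in_w e(1) vec.subspace_0[OF E(1)] by (intro vec.span_diff)
  finally have "w \<in> E"
    using in_span_singleton_swap[OF _ e(2)] vec.span_minimal[of "{e}" E] e(1) E(1) by blast
  then have "vec.span {w} \<subseteq> E" using E(1) by (simp add: vec.span_minimal)
  then have "- v \<in> E" using in_w[of 0] vec.subspace_0[OF E(1)] vec.subspace_neg[OF E(1)] by auto
  then show False using nz[of "- v"] by simp
qed

lemma dim_less_if_translates_nonzero:
  fixes E V :: "('k::field^'m) set"
  assumes "vec.subspace E" "vec.subspace V" "E \<subseteq> V" "v \<in> V" "\<forall>e\<in>E. v + e \<noteq> 0"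
  shows "vec.dim E < vec.dim V"
proof -
  have "E \<noteq> V" using assms(4,5) vec.subspace_neg[OF assms(2)] by force
  then show ?thesis
    using vec.subspace_dim_equal[OF assms(1-3)] vec.dim_subset[OF assms(3)] by linarith
qed

lemma exists_linear_kernel_span_singleton:
  fixes z :: "'k::field^'m"
  assumes "z \<noteq> 0"
  obtains \<pi> :: "'k^'m \<Rightarrow> 'k^'m"
  where "Vector_Spaces.linear (*s) (*s) \<pi>" "\<And>v. \<pi> v = 0 \<longleftrightarrow> v \<in> vec.span {z}"
proof -
  define B where "B = vec.extend_basis {z}"
  have B: "vec.independent B" "vec.span B = UNIV" "z \<in> B"
    using assms vec.independent_extend_basis[of "{z}"] vec.extend_basis_superset[of "{z}"]
    by (auto simp: B_def)
  define r where "r v = vec.representation B v z" for v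
  have r: "r (u + v) = r u + r v" "r (c *s v) = c * r v" "r z = 1" for u v c
    using B by (simp_all add: r_def vec.representation_add vec.representation_scale
        vec.representation_basis)
  define \<pi> where "\<pi> v = v - r v *s z" for v
  have lin: "Vector_Spaces.linear (*s) (*s) \<pi>"
    by (auto simp: Vector_Spaces.linear_iff vec.vector_space_axioms \<pi>_def r algebra_simps
        vec.scale_left_distrib)
  moreover have "\<pi> v = 0 \<longleftrightarrow> v \<in> vec.span {z}" for v
  proof
    assume "\<pi> v = 0"
    then have "v = r v *s z" by (simp add: \<pi>_def)
    then show "v \<in> vec.span {z}" by (metis vec.span_base vec.span_scale singletonI)
  next
    assume "v \<in> vec.span {z}"
    then obtain c where "v = c *s z" by (auto simp: vec.span_singleton)
    then show "\<pi> v = 0" by (simp add: \<pi>_def r)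
  qed
  ultimately show ?thesis using that by blast
qed

lemma notin_span_insert_if_linear_image:
  fixes \<pi> :: "'k::field^'m \<Rightarrow> 'k^'m2"
  assumes \<pi>: "Vector_Spaces.linear (*s) (*s) \<pi>" and "\<pi> z = 0" and "\<pi> w \<notin> vec.span (\<pi> ` A)"
  shows "w \<notin> vec.span (insert z A)"
proof
  assume "w \<in> vec.span (insert z A)"
  then obtain k where "w - k *s z \<in> vec.span A" by (auto simp: vec.span_insert)
  then have "\<pi> (w - k *s z) \<in> vec.span (\<pi> ` A)" by (metis image_eqI vec.linear_span_image[OF \<pi>])
  then show False
    using assms(2,3) by (simp add: vec.linear_diff[OF \<pi>] vec.linear_scale[OF \<pi>])
qed

lemma linear_comp_left:
  assumes \<pi>: "Vector_Spaces.linear (*s) (*s) (\<pi> :: 'k::field^'m \<Rightarrow> 'k^'m2)"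
  shows "Vector_Spaces.linear fscale fscale (\<lambda>g :: 'a \<Rightarrow> 'k^'m. \<pi> \<circ> g)"
  by (simp add: Vector_Spaces.linear_iff funvs.vector_space_axioms fun_eq_iff fscale_apply
      vec.linear_add[OF \<pi>] vec.linear_scale[OF \<pi>])

lemma dim_le_dim_comp_image_add_card:
  fixes T :: "('n::finite \<Rightarrow> 'k::field^'m) set"
  assumes \<pi>: "Vector_Spaces.linear (*s) (*s) (\<pi> :: 'k^'m \<Rightarrow> 'k^'m2)"
    and ker: "\<And>v. \<pi> v = 0 \<longleftrightarrow> v \<in> vec.span {z}" and "z \<noteq> 0"
    and T: "funvs.subspace T" "T \<subseteq> families V J"
  shows "funvs.dim T \<le> funvs.dim ((\<lambda>g. \<pi> \<circ> g) ` T) + card J"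
proof -
  have "{g\<in>T. \<pi> \<circ> g = 0} \<subseteq> families (vec.span {z}) J"
  proof
    fix g assume "g \<in> {g\<in>T. \<pi> \<circ> g = 0}"
    then have "g \<in> families V J" "\<And>i. \<pi> (g i) = 0" using T(2) by (auto simp: fun_eq_iff)
    then show "g \<in> families (vec.span {z}) J" by (simp add: families_def flip: ker)
  qed
  then have "funvs.dim {g\<in>T. \<pi> \<circ> g = 0} \<le> funvs.dim (families (vec.span {z}) J)"
    by (rule family.dim_subset)
  also have "\<dots> = card J"
    using \<open>z \<noteq> 0\<close> by (simp add: dim_families)
  finally show ?thesis
    using family_fun.rank_nullity[OF linear_comp_left[OF \<pi>] T(1)] by simp
qed

section \<open>Families whose columns avoid a vector\<close>

lemma exists_family_avoiding_modulo_line: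
  fixes J :: "'n::finite set" and V :: "('k::field^'m) set" and T :: "('n \<Rightarrow> 'k^'m) set"
  assumes IH: "\<And>(V :: ('k^'m) set) (T :: ('n \<Rightarrow> 'k^'m) set) f w.
      vec.subspace V \<Longrightarrow> funvs.subspace T \<Longrightarrow> T \<subseteq> families V J \<Longrightarrow> \<forall>i\<in>J. f i \<in> V \<Longrightarrow>
      w \<in> V \<Longrightarrow> w \<noteq> 0 \<Longrightarrow> funvs.dim (families V J) < funvs.dim T + vec.dim V \<Longrightarrow>
      \<exists>t\<in>T. w \<notin> vec.span ((f + t) ` J)"
    and V: "vec.subspace V" and T: "funvs.subspace T" "T \<subseteq> families V J"
    and f: "\<forall>i\<in>J. f i \<in> V" and z: "z \<in> V" "z \<noteq> 0" and w: "w \<in> V" "w \<notin> vec.span {z}"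
    and codim: "funvs.dim (families V J) + 2 \<le> funvs.dim T + vec.dim V"
  shows "\<exists>t\<in>T. w \<notin> vec.span (insert z ((f + t) ` J))"
proof -
  txt \<open>Pass to the quotient \<open>V / span {z}\<close>: the codimension of \<open>T\<close> does not grow, \<open>dim V\<close> drops by one.\<close>
  obtain \<pi> :: "'k^'m \<Rightarrow> 'k^'m"
    where \<pi>: "Vector_Spaces.linear (*s) (*s) \<pi>" and ker: "\<And>v. \<pi> v = 0 \<longleftrightarrow> v \<in> vec.span {z}"
    using exists_linear_kernel_span_singleton[OF z(2)] by blast
  define V' where "V' = \<pi> ` V"
  define T' where "T' = (\<lambda>g. \<pi> \<circ> g) ` T"
  have V': "vec.subspace V'" unfolding V'_def by (rule vec.linear_subspace_image[OF \<pi> V])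
  have T': "funvs.subspace T'" "T' \<subseteq> families V' J"
    using family_fun.linear_subspace_image[OF linear_comp_left[OF \<pi>] T(1)] T(2) vec.linear_0[OF \<pi>]
    by (auto simp: T'_def V'_def families_def)
  have "{v\<in>V. \<pi> v = 0} = vec.span {z}" using ker vec.span_minimal[of "{z}" V] z(1) V by auto
  then have dim_V: "vec.dim V = vec.dim V' + 1"
    using vec.rank_nullity[OF \<pi> V] z(2) by (simp add: V'_def)
  have "funvs.dim (families V J) = funvs.dim (families V' J) + card J"
    using V V' dim_V by (simp add: dim_families)
  then have "funvs.dim (families V' J) < funvs.dim T' + vec.dim V'"
    using codim dim_V dim_le_dim_comp_image_add_card[OF \<pi> ker z(2) T] by (simp add: T'_def)
  moreover have "\<forall>i\<in>J. (\<pi> \<circ> f) i \<in> V'" "\<pi> w \<in> V'" "\<pi> w \<noteq> 0"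
    using f w ker by (auto simp: V'_def)
  ultimately obtain t' where "t' \<in> T'" "\<pi> w \<notin> vec.span (((\<pi> \<circ> f) + t') ` J)"
    using IH[OF V' T'] by blast
  then obtain t where t: "t \<in> T" "\<pi> w \<notin> vec.span (((\<pi> \<circ> f) + (\<pi> \<circ> t)) ` J)"
    by (auto simp: T'_def)
  have "\<pi> ` (f + t) ` J = ((\<pi> \<circ> f) + (\<pi> \<circ> t)) ` J"
    by (auto simp: vec.linear_add[OF \<pi>] image_image)
  then have "w \<notin> vec.span (insert z ((f + t) ` J))"
    using notin_span_insert_if_linear_image[OF \<pi>] ker[of z] t(2) by (simp add: vec.span_base)
  then show ?thesis using t(1) by blast
qed

lemma exists_family_avoiding_insert:
  fixes J :: "'n::finite set" and V :: "('k::field^'m) set" and T :: "('n \<Rightarrow> 'k^'m) set"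
  assumes IH: "\<And>(V :: ('k^'m) set) (T :: ('n \<Rightarrow> 'k^'m) set) f w.
      vec.subspace V \<Longrightarrow> funvs.subspace T \<Longrightarrow> T \<subseteq> families V J \<Longrightarrow> \<forall>i\<in>J. f i \<in> V \<Longrightarrow>
      w \<in> V \<Longrightarrow> w \<noteq> 0 \<Longrightarrow> funvs.dim (families V J) < funvs.dim T + vec.dim V \<Longrightarrow>
      \<exists>t\<in>T. w \<notin> vec.span ((f + t) ` J)"
    and e: "e \<notin> J" and V: "vec.subspace V"
    and T: "funvs.subspace T" "T \<subseteq> families V (insert e J)" and f: "\<forall>i\<in>insert e J. f i \<in> V"
    and w: "w \<in> V" "w \<noteq> 0"
    and codim: "funvs.dim (families V (insert e J)) < funvs.dim T + vec.dim V"
  shows "\<exists>t\<in>T. w \<notin> vec.span ((f + t) ` insert e J)"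
proof -
  define E where "E = (\<lambda>t. t e) ` T"
  define T0 where "T0 = {t\<in>T. t e = 0}"
  have E: "vec.subspace E" "E \<subseteq> V"
    using subspace_eval_image[OF T(1)] T(2) by (auto simp: E_def families_def)
  have T0: "funvs.subspace T0" "T0 \<subseteq> families V J"
    using subspace_eval_kernel[OF T(1)] T(2) by (force simp: T0_def families_def)+
  have "funvs.dim T = funvs.dim T0 + vec.dim E"
    unfolding T0_def E_def by (rule dim_eval_kernel[OF T(1)])
  moreover have "funvs.dim (families V (insert e J)) = funvs.dim (families V J) + vec.dim V"
    using dim_families_remove[OF V, of e "insert e J"] e by simp
  ultimately have codim_T0: "funvs.dim (families V J) + vec.dim V < funvs.dim T0 + vec.dim E + vec.dim V"
    using codim by linarith
  have f_t: "\<forall>i\<in>J. (f + t) i \<in> V" "f e + t e \<in> V" if "t \<in> T" for t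
    using that f T(2) V by (auto simp: families_def vec.subspace_add)
  txt \<open>Either the column \<open>e\<close> of some member of \<open>f + T\<close> vanishes, or it can be chosen off the line of \<open>w\<close>.\<close>
  have "\<exists>t\<in>T. \<exists>t0\<in>T0. w \<notin> vec.span (insert (f e + t e) ((f + t + t0) ` J))"
  proof (cases "\<exists>t\<in>T. f e + t e = 0")
    case True
    then obtain t where t: "t \<in> T" "f e + t e = 0" by blast
    have "funvs.dim (families V J) < funvs.dim T0 + vec.dim V"
      using codim_T0 vec.dim_subset[OF E(2)] by linarith
    then obtain t0 where "t0 \<in> T0" "w \<notin> vec.span ((f + t + t0) ` J)"
      using IH[OF V T0 f_t(1)[OF t(1)] w] by blast
    then show ?thesis using t by (metis vec.span_insert_0)
  next
    case False
    then have "vec.dim E < vec.dim V"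
      using dim_less_if_translates_nonzero[OF E(1) V E(2)] f by (auto simp: E_def)
    moreover have "E \<noteq> {0}"
      using codim_T0 family.dim_subset[OF T0(2)] by auto
    then obtain t where t: "t \<in> T" "f e + t e \<noteq> 0" "w \<notin> vec.span {f e + t e}"
      using exists_translate_zero_or_not_spanning[OF E(1) _ w(2), of "f e"] False
      by (auto simp: E_def)
    ultimately have codim': "funvs.dim (families V J) + 2 \<le> funvs.dim T0 + vec.dim V"
      using codim_T0 by linarith
    have "\<exists>t0\<in>T0. w \<notin> vec.span (insert (f e + t e) ((f + t + t0) ` J))"
      by (rule exists_family_avoiding_modulo_line[OF _ V T0 f_t(1)[OF t(1)] f_t(2)[OF t(1)]
            t(2) w(1) t(3) codim']) (rule IH)
    then show ?thesis using t(1) by blast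
  qed
  then obtain t t0 where t: "t \<in> T" "t0 \<in> T0"
    and avoid: "w \<notin> vec.span (insert (f e + t e) ((f + t + t0) ` J))" by blast
  have "(f + (t + t0)) ` insert e J = insert (f e + t e) ((f + t + t0) ` J)"
    using t(2) by (simp add: T0_def add.assoc)
  moreover have "t + t0 \<in> T" using t T(1) by (auto simp: T0_def funvs.subspace_add)
  ultimately show ?thesis using avoid by metis
qed

lemma exists_family_avoiding:
  fixes J :: "'n::finite set" and V :: "('k::field^'m) set" and T :: "('n \<Rightarrow> 'k^'m) set"
  assumes "vec.subspace V" "funvs.subspace T" "T \<subseteq> families V J" "\<forall>i\<in>J. f i \<in> V"
    and "w \<in> V" "w \<noteq> 0" "funvs.dim (families V J) < funvs.dim T + vec.dim V"
  shows "\<exists>t\<in>T. w \<notin> vec.span ((f + t) ` J)"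
  using finite[of J] assms
proof (induction J arbitrary: V T f w rule: finite_induct)
  case empty
  then show ?case using funvs.subspace_0 by force
next
  case (insert e J)
  show ?case
    by (rule exists_family_avoiding_insert[OF _ insert.hyps(2) insert.prems]) (rule insert.IH)
qed

lemma exists_family_avoiding_with_vector:
  fixes J :: "'n::finite set" and T :: "('n \<Rightarrow> 'k::field^'m) set"
  assumes T: "funvs.subspace T" "T \<subseteq> families UNIV J" and w: "w \<notin> vec.span {c}"
    and codim: "funvs.dim (families UNIV J :: ('n \<Rightarrow> 'k^'m) set) + 2 \<le> funvs.dim T + CARD('m)"
  shows "\<exists>t\<in>T. w \<notin> vec.span (insert c ((f + t) ` J))"
proof (cases "c = 0")
  case True
  have "funvs.dim (families UNIV J :: ('n \<Rightarrow> 'k^'m) set) < funvs.dim T + vec.dim (UNIV :: ('k^'m) set)"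
    using codim by (simp add: vec_dim_card card_cart_basis)
  then show ?thesis
    using exists_family_avoiding[OF vec.subspace_UNIV T, of f w] w True by auto
next
  case False
  then show ?thesis
    using exists_family_avoiding_modulo_line[OF exists_family_avoiding vec.subspace_UNIV T]
      w codim by (simp add: vec_dim_card card_cart_basis)
qed

section \<open>Range-compatible additive maps on spaces of small codimension\<close>

lemma combination_coefficient_eq_zero:
  fixes T :: "('n::finite \<Rightarrow> 'k::field^'m) set"
  assumes T: "T \<subseteq> families UNIV J"
    and codim: "funvs.dim (families UNIV J :: ('n \<Rightarrow> 'k^'m) set) < funvs.dim T + CARD('m)"
    and vanish: "\<forall>s\<in>T. (\<Sum>j\<in>J. \<mu> j *s s j) = 0" and k: "k \<in> J"
  shows "\<mu> k = 0"
proof (rule ccontr)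
  assume \<mu>k: "\<mu> k \<noteq> 0"
  txt \<open>If \<open>\<mu> k \<noteq> 0\<close>, the combination map is onto \<open>V\<close>, so its kernel is too small to contain \<open>T\<close>.\<close>
  define \<Phi> where "\<Phi> f = (\<Sum>j\<in>J. \<mu> j *s f j)" for f :: "'n \<Rightarrow> 'k^'m"
  have \<Phi>: "Vector_Spaces.linear fscale (*s) \<Phi>"
    by (simp add: Vector_Spaces.linear_iff funvs.vector_space_axioms vec.vector_space_axioms
        \<Phi>_def fscale_apply vec.scale_right_distrib sum.distrib vec.scale_sum_right
        vector_smult_assoc mult.commute)
  have "v \<in> \<Phi> ` families UNIV J" for v :: "'k^'m"
  proof (rule rev_image_eqI)
    show "unit_family k (inverse (\<mu> k) *s v) \<in> families UNIV J"
      using k by (auto simp: families_def unit_family_def)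
    have "\<Phi> (unit_family k (inverse (\<mu> k) *s v)) = (\<Sum>j\<in>J. if j = k then v else 0)"
      unfolding \<Phi>_def unit_family_def by (rule sum.cong) (auto simp: \<mu>k)
    then show "v = \<Phi> (unit_family k (inverse (\<mu> k) *s v))" using k by simp
  qed
  then have "\<Phi> ` families UNIV J = UNIV" by auto
  then have "funvs.dim (families UNIV J :: ('n \<Rightarrow> 'k^'m) set)
      = funvs.dim {f \<in> families UNIV J. \<Phi> f = 0} + CARD('m)"
    using family_vec.rank_nullity[OF \<Phi> subspace_families[OF vec.subspace_UNIV]]
    by (simp add: vec_dim_card card_cart_basis)
  moreover have "funvs.dim T \<le> funvs.dim {f \<in> families UNIV J. \<Phi> f = 0}"
    using T vanish by (intro family.dim_subset) (auto simp: \<Phi>_def)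
  ultimately show False using codim by linarith
qed

lemma additive_in_span_eval_imp_scalar:
  fixes S :: "('n::finite \<Rightarrow> 'k::field^'m) set"
  assumes S: "funvs.subspace S" and dim: "2 \<le> vec.dim ((\<lambda>s. s i) ` S)"
    and add: "\<forall>s\<in>S. \<forall>t\<in>S. F (s + t) = F s + F t" and F: "\<forall>s\<in>S. F s \<in> vec.span {s i}"
  shows "\<exists>c. \<forall>s\<in>S. F s = c *s s i"
proof -
  have coef: "\<exists>a. F s = a *s s i" if "s \<in> S" for s
    using F that by (auto simp: vec.span_singleton)
  have same: "a = b" if st: "s \<in> S" "t \<in> S" and si: "s i \<noteq> 0" and ti: "t i \<notin> vec.span {s i}"
    and a: "F s = a *s s i" and b: "F t = b *s t i" for s t a b
  proof (rule scale_coefficients_eq[OF si ti])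
    show "a *s s i + b *s t i \<in> vec.span {s i + t i}"
      using F add st a b funvs.subspace_add[OF S] by (metis plus_fun_apply)
  qed
  obtain s0 where s0: "s0 \<in> S" "s0 i \<noteq> 0"
    using not_subset_span_singleton[OF dim, of 0] by auto
  obtain c where c: "F s0 = c *s s0 i" using coef[OF s0(1)] by blast
  obtain u where u: "u \<in> S" "u i \<notin> vec.span {s0 i}"
    using not_subset_span_singleton[OF dim, of "s0 i"] by auto
  obtain b where b: "F u = b *s u i" using coef[OF u(1)] by blast
  have cb: "c = b" by (rule same[OF s0(1) u(1) s0(2) u(2) c b])
  have "F s = c *s s i" if s: "s \<in> S" for s
  proof -
    obtain a where a: "F s = a *s s i" using coef[OF s] by blast
    consider "s i = 0" | "s i \<noteq> 0" "s i \<notin> vec.span {s0 i}" | "s i \<noteq> 0" "s i \<in> vec.span {s0 i}"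
      by blast
    then show ?thesis
    proof cases
      case 1
      then show ?thesis using a by simp
    next
      case 2
      then show ?thesis using same[OF s0(1) s s0(2) _ c a] a by simp
    next
      case 3
      have "vec.span {s i} \<subseteq> vec.span {s0 i}" using 3(2) by (simp add: vec.span_minimal)
      then have "u i \<notin> vec.span {s i}" using u(2) by blast
      then show ?thesis using same[OF s u(1) 3(1) _ a b] a cb by simp
    qed
  qed
  then show ?thesis by blast
qed

lemma additive_value_in_span_eval:
  fixes S :: "('n::finite \<Rightarrow> 'k::field^'m) set"
  assumes S: "funvs.subspace S" "S \<subseteq> families UNIV J" and i: "i \<in> J"
    and codim: "funvs.dim (families UNIV (J - {i}) :: ('n \<Rightarrow> 'k^'m) set) + 2
      \<le> funvs.dim {s\<in>S. s i = 0} + CARD('m)"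
    and add: "\<forall>s\<in>S. \<forall>t\<in>S. G (s + t) = G s + G t"
    and vanish: "\<forall>s\<in>S. s i = 0 \<longrightarrow> G s = 0"
    and rc: "\<forall>s\<in>S. G s \<in> vec.span (s ` J)"
    and s: "s \<in> S"
  shows "G s \<in> vec.span {s i}"
proof (rule ccontr)
  assume "G s \<notin> vec.span {s i}"
  txt \<open>\<open>G\<close> is constant on \<open>s\<close> plus the kernel; pick \<open>t\<close> there so that the columns of \<open>s + t\<close> avoid \<open>G s\<close>.\<close>
  then obtain t where t: "t \<in> S" "t i = 0"
    and avoid: "G s \<notin> vec.span (insert (s i) ((s + t) ` (J - {i})))"
    using exists_family_avoiding_with_vector[OF subspace_eval_kernel[OF S(1)]
        kernel_eval_in_families[OF S(2)] _ codim]
    by blast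
  have "(s + t) ` J = insert (s i) ((s + t) ` (J - {i}))"
    using i t(2) by (metis (no_types, lifting) add.right_neutral image_insert insert_Diff plus_fun_apply)
  moreover have "G (s + t) = G s" using add vanish s t by simp
  moreover have "G (s + t) \<in> vec.span ((s + t) ` J)"
    using rc funvs.subspace_add[OF S(1) s t(1)] by blast
  ultimately show False using avoid by simp
qed

lemma kernel_coefficients_agree:
  fixes S :: "('n::finite \<Rightarrow> 'k::field^'m) set"
  assumes S: "funvs.subspace S" "S \<subseteq> families UNIV J"
    and codim: "funvs.dim (families UNIV J :: ('n \<Rightarrow> 'k^'m) set) + 2 \<le> funvs.dim S + CARD('m)"
    and \<Lambda>: "\<forall>i\<in>J. \<forall>s\<in>{s\<in>S. s i = 0}. F s = (\<Sum>j\<in>J - {i}. \<Lambda> i j *s s j)"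
    and ikj: "i \<in> J" "k \<in> J" "j \<in> J" "i \<noteq> k" "j \<noteq> i" "j \<noteq> k"
  shows "\<Lambda> i j = \<Lambda> k j"
proof -
  define S\<^sub>i\<^sub>k where "S\<^sub>i\<^sub>k = {s\<in>{s\<in>S. s i = 0}. s k = 0}"
  have "S\<^sub>i\<^sub>k \<subseteq> families UNIV (J - {i} - {k})"
    using S(2) by (auto simp: S\<^sub>i\<^sub>k_def families_def)
  moreover have "funvs.dim (families UNIV (J - {i} - {k}) :: ('n \<Rightarrow> 'k^'m) set) < funvs.dim S\<^sub>i\<^sub>k + CARD('m)"
    using codim_kernel_eval_le[OF subspace_eval_kernel[OF S(1)] _ codim_kernel_eval_le[OF S(1) _ codim],
        of k i] ikj
    by (simp add: S\<^sub>i\<^sub>k_def)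
  moreover have "\<forall>s\<in>S\<^sub>i\<^sub>k. (\<Sum>j\<in>J - {i} - {k}. (\<Lambda> i j - \<Lambda> k j) *s s j) = 0"
  proof
    fix s assume s: "s \<in> S\<^sub>i\<^sub>k"
    then have "F s = (\<Sum>j\<in>J - {i} - {k}. \<Lambda> i j *s s j)"
      using \<Lambda>[rule_format, of i s] sum_remove_zero_term[of s k "\<Lambda> i" "J - {i}"] ikj
      by (simp add: S\<^sub>i\<^sub>k_def)
    moreover have "F s = (\<Sum>j\<in>J - {i} - {k}. \<Lambda> k j *s s j)"
      using \<Lambda>[rule_format, of k s] sum_remove_zero_term[of s i "\<Lambda> k" "J - {k}"] ikj s
      by (simp add: S\<^sub>i\<^sub>k_def Diff_insert2[symmetric] insert_commute)
    ultimately show "(\<Sum>j\<in>J - {i} - {k}. (\<Lambda> i j - \<Lambda> k j) *s s j) = 0"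
      by (simp add: vec.scale_left_diff_distrib sum_subtractf)
  qed
  ultimately have "\<Lambda> i j - \<Lambda> k j = 0"
    by (rule combination_coefficient_eq_zero) (simp add: ikj)
  then show ?thesis by simp
qed

lemma exists_common_kernel_coefficients:
  fixes S :: "('n::finite \<Rightarrow> 'k::field^'m) set"
  assumes S: "funvs.subspace S" "S \<subseteq> families UNIV J"
    and codim: "funvs.dim (families UNIV J :: ('n \<Rightarrow> 'k^'m) set) + 2 \<le> funvs.dim S + CARD('m)"
    and kernels: "\<forall>i\<in>J. \<exists>c. \<forall>s\<in>{s\<in>S. s i = 0}. F s = (\<Sum>j\<in>J - {i}. c j *s s j)"
  shows "\<exists>\<mu>. \<forall>i\<in>J. \<forall>s\<in>S. s i = 0 \<longrightarrow> F s = (\<Sum>j\<in>J. \<mu> j *s s j)"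
proof -
  obtain \<Lambda> where \<Lambda>: "\<forall>i\<in>J. \<forall>s\<in>{s\<in>S. s i = 0}. F s = (\<Sum>j\<in>J - {i}. \<Lambda> i j *s s j)"
    using kernels by (rule bchoice[THEN exE])
  define \<mu> where "\<mu> j = \<Lambda> (SOME i. i \<in> J \<and> i \<noteq> j) j" for j
  have \<mu>: "\<mu> j = \<Lambda> i j" if "i \<in> J" "j \<in> J" "j \<noteq> i" for i j
  proof -
    define i' where "i' = (SOME i. i \<in> J \<and> i \<noteq> j)"
    have "\<exists>i. i \<in> J \<and> i \<noteq> j" using that by blast
    then have "i' \<in> J \<and> i' \<noteq> j" unfolding i'_def by (rule someI_ex)
    then show ?thesis
      using kernel_coefficients_agree[OF S codim \<Lambda>, of i' i j] that
      by (cases "i' = i") (auto simp: \<mu>_def i'_def)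
  qed
  have "F s = (\<Sum>j\<in>J. \<mu> j *s s j)" if "i \<in> J" "s \<in> S" "s i = 0" for i s
  proof -
    have "(\<Sum>j\<in>J. \<mu> j *s s j) = (\<Sum>j\<in>J - {i}. \<mu> j *s s j)"
      by (rule sum_remove_zero_term[of s i, OF that(3)])
    also have "\<dots> = (\<Sum>j\<in>J - {i}. \<Lambda> i j *s s j)"
      using \<mu>[OF that(1)] by (intro sum.cong) auto
    finally show ?thesis using \<Lambda> that by simp
  qed
  then show ?thesis by (intro exI[of _ \<mu>] ballI impI)
qed

lemma additive_eq_zero_if_in_all_spans_eval:
  fixes S :: "('n::finite \<Rightarrow> 'k::field^'m) set"
  assumes S: "funvs.subspace S" "S \<subseteq> families UNIV J" and J: "2 \<le> card J"
    and codim: "funvs.dim (families UNIV J :: ('n \<Rightarrow> 'k^'m) set) + 2 \<le> funvs.dim S + CARD('m)"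
    and add: "\<forall>s\<in>S. \<forall>t\<in>S. G (s + t) = G s + G t"
    and vanish: "\<forall>i\<in>J. \<forall>s\<in>S. s i = 0 \<longrightarrow> G s = 0"
    and line: "\<forall>i\<in>J. \<forall>s\<in>S. G s \<in> vec.span {s i}"
    and s: "s \<in> S"
  shows "G s = 0"
proof -
  from J obtain i where i: "i \<in> J" by fastforce
  have "card (J - {i}) \<noteq> 0" using J i by simp
  then obtain k where "k \<in> J - {i}" by (metis all_not_in_conv card.empty)
  then have ik: "i \<in> J" "k \<in> J" "i \<noteq> k" using i by auto
  define S\<^sub>i where "S\<^sub>i = {s\<in>S. s i = 0}"
  show ?thesis
  proof (cases "s i = 0")
    case True
    then show ?thesis using vanish ik(1) s by blast
  next
    case False
    have S\<^sub>i: "funvs.subspace S\<^sub>i" "S\<^sub>i \<subseteq> families UNIV (J - {i})"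
      unfolding S\<^sub>i_def by (fact subspace_eval_kernel[OF S(1)] kernel_eval_in_families[OF S(2)])+
    have "2 \<le> vec.dim ((\<lambda>t. t k) ` S\<^sub>i)"
      using dim_eval_image_ge_2[OF S\<^sub>i _ codim_kernel_eval_le[OF S(1) ik(1) codim, folded S\<^sub>i_def]] ik
      by simp
    txt \<open>Shift \<open>s\<close> within the kernel at \<open>i\<close> until its columns \<open>i\<close> and \<open>k\<close> are independent.\<close>
    then obtain t where t: "t \<in> S\<^sub>i" "s k + t k \<notin> vec.span {s i}"
      using exists_translate_notin_span_singleton[OF subspace_eval_image[OF S\<^sub>i(1)]
          not_subset_span_singleton] by blast
    have st: "s + t \<in> S" "(s + t) i = s i" "G (s + t) = G s"
      using t(1) s add vanish ik(1) funvs.subspace_add[OF S(1)] by (auto simp: S\<^sub>i_def)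
    have "G s \<in> vec.span {s i}" "G s \<in> vec.span {(s + t) k}"
      using line ik s st by metis+
    then show ?thesis using span_singleton_Int_eq_zero t(2) by simp
  qed
qed

lemma local_if_local_on_eval_kernels:
  fixes S :: "('n::finite \<Rightarrow> 'k::field^'m) set"
  assumes S: "funvs.subspace S" "S \<subseteq> families UNIV J" and J: "2 \<le> card J"
    and codim: "funvs.dim (families UNIV J :: ('n \<Rightarrow> 'k^'m) set) + 2 \<le> funvs.dim S + CARD('m)"
    and add: "\<forall>s\<in>S. \<forall>t\<in>S. F (s + t) = F s + F t" and rc: "\<forall>s\<in>S. F s \<in> vec.span (s ` J)"
    and kernels: "\<forall>i\<in>J. \<exists>c. \<forall>s\<in>{s\<in>S. s i = 0}. F s = (\<Sum>j\<in>J - {i}. c j *s s j)"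
  shows "\<exists>c. \<forall>s\<in>S. F s = (\<Sum>j\<in>J. c j *s s j)"
proof -
  obtain \<mu> where \<mu>: "\<forall>i\<in>J. \<forall>s\<in>S. s i = 0 \<longrightarrow> F s = (\<Sum>j\<in>J. \<mu> j *s s j)"
    using exists_common_kernel_coefficients[OF S codim kernels] by blast
  define G where "G s = F s - (\<Sum>j\<in>J. \<mu> j *s s j)" for s
  have G_add: "\<forall>s\<in>S. \<forall>t\<in>S. G (s + t) = G s + G t"
    using add by (simp add: G_def vec.scale_right_distrib sum.distrib algebra_simps)
  have G_vanish: "\<forall>i\<in>J. \<forall>s\<in>S. s i = 0 \<longrightarrow> G s = 0"
    using \<mu> by (simp add: G_def)
  have G_rc: "\<forall>s\<in>S. G s \<in> vec.span (s ` J)"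
  proof
    fix s assume s: "s \<in> S"
    have "(\<Sum>j\<in>J. \<mu> j *s s j) \<in> vec.span (s ` J)"
      by (intro vec.span_sum vec.span_scale vec.span_base) simp
    then show "G s \<in> vec.span (s ` J)" using rc s by (simp add: G_def vec.span_diff)
  qed
  have "\<forall>i\<in>J. \<forall>s\<in>S. G s \<in> vec.span {s i}"
  proof (intro ballI)
    fix i s assume i: "i \<in> J" and s: "s \<in> S"
    have "\<forall>s\<in>S. s i = 0 \<longrightarrow> G s = 0" using G_vanish i by blast
    then show "G s \<in> vec.span {s i}"
      using additive_value_in_span_eval[OF S i codim_kernel_eval_le[OF S(1) i codim] G_add _ G_rc s]
      by blast
  qed
  then have "\<forall>s\<in>S. G s = 0"
    using additive_eq_zero_if_in_all_spans_eval[OF S J codim G_add G_vanish] by blast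
  then show ?thesis by (auto simp: G_def)
qed

theorem additive_range_compatible_family_map_local:
  fixes S :: "('n::finite \<Rightarrow> 'k::field^'m) set"
  assumes "funvs.subspace S" "S \<subseteq> families UNIV J"
    and "funvs.dim (families UNIV J :: ('n \<Rightarrow> 'k^'m) set) + 2 \<le> funvs.dim S + CARD('m)"
    and "\<forall>s\<in>S. \<forall>t\<in>S. F (s + t) = F s + F t" and "\<forall>s\<in>S. F s \<in> vec.span (s ` J)"
  shows "\<exists>c. \<forall>s\<in>S. F s = (\<Sum>j\<in>J. c j *s s j)"
  using assms
proof (induction "card J" arbitrary: J S F rule: less_induct)
  case less
  note S = less.prems(1,2) and codim = less.prems(3) and add = less.prems(4) and rc = less.prems(5)
  consider "J = {}" | i where "J = {i}" | "2 \<le> card J"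
    by (metis One_nat_def card_1_singleton_iff card_eq_0_iff finite less_2_cases not_le)
  then show ?case
  proof cases
    case 1
    then show ?thesis using rc by simp
  next
    case (2 i)
    have "2 \<le> vec.dim ((\<lambda>s. s i) ` S)" using dim_eval_image_ge_2[OF S _ codim] 2 by simp
    moreover have "\<forall>s\<in>S. F s \<in> vec.span {s i}" using rc 2 by simp
    ultimately obtain c where "\<forall>s\<in>S. F s = c *s s i"
      using additive_in_span_eval_imp_scalar[OF S(1) _ add] by blast
    then show ?thesis using 2 by (intro exI[of _ "\<lambda>_. c"]) simp
  next
    case 3
    have "\<exists>c. \<forall>s\<in>{s\<in>S. s i = 0}. F s = (\<Sum>j\<in>J - {i}. c j *s s j)" if i: "i \<in> J" for i
    proof -
      have "\<forall>s\<in>{s\<in>S. s i = 0}. \<forall>t\<in>{s\<in>S. s i = 0}. F (s + t) = F s + F t"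
        using add by simp
      moreover have "\<forall>s\<in>{s\<in>S. s i = 0}. F s \<in> vec.span (s ` (J - {i}))"
      proof
        fix s assume "s \<in> {s\<in>S. s i = 0}"
        then show "F s \<in> vec.span (s ` (J - {i}))" using rc span_image_remove_zero[of s i J] by auto
      qed
      ultimately show ?thesis
        using less.hyps[OF card_Diff1_less[OF finite i] subspace_eval_kernel[OF S(1)]
            kernel_eval_in_families[OF S(2)] codim_kernel_eval_le[OF S(1) i codim]] by blast
    qed
    then show ?thesis using local_if_local_on_eval_kernels[OF S 3 codim add rc] by blast
  qed
qed

lemma exists_coefficients_local_on_eval_kernel:
  fixes S :: "('n::finite \<Rightarrow> 'k::field^'m) set"
  assumes S: "funvs.subspace S"
    and codim: "funvs.dim (UNIV :: ('n \<Rightarrow> 'k^'m) set) + 3 \<le> funvs.dim S + 2 * CARD('m)"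
    and dim: "vec.dim ((\<lambda>s. s i) ` S) \<le> 1"
    and add: "\<forall>s\<in>S. \<forall>t\<in>S. F (s + t) = F s + F t"
    and rc: "\<forall>s\<in>S. F s \<in> vec.span (range s)"
  shows "\<exists>c. \<forall>s\<in>S. (s i = 0 \<longrightarrow> F s = (\<Sum>j\<in>UNIV - {i}. c j *s s j))
    \<and> F s - (\<Sum>j\<in>UNIV - {i}. c j *s s j) \<in> vec.span {s i}"
proof -
  define K where "K = {s\<in>S. s i = 0}"
  have K: "funvs.subspace K" "K \<subseteq> families UNIV (UNIV - {i})"
    using subspace_eval_kernel[OF S] kernel_eval_in_families[of S UNIV UNIV i]
    by (simp_all add: K_def)
  txt \<open>Column \<open>i\<close> of \<open>S\<close> spans at most a line, so \<open>K\<close> has codimension at most \<open>dim V - 2\<close>.\<close>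
  have codim_K: "funvs.dim (families UNIV (UNIV - {i}) :: ('n \<Rightarrow> 'k^'m) set) + 2
      \<le> funvs.dim K + CARD('m)"
    using dim_eval_kernel[OF S, of i] dim codim
      dim_families_UNIV_remove[of i UNIV, where 'k='k and 'm='m]
    by (simp add: K_def)
  have "\<forall>s\<in>K. F s \<in> vec.span (s ` (UNIV - {i}))"
  proof
    fix s assume "s \<in> K"
    then show "F s \<in> vec.span (s ` (UNIV - {i}))"
      using rc span_image_remove_zero[of s i UNIV] by (auto simp: K_def)
  qed
  moreover have "\<forall>s\<in>K. \<forall>t\<in>K. F (s + t) = F s + F t" using add by (simp add: K_def)
  ultimately obtain c where c: "\<forall>s\<in>K. F s = (\<Sum>j\<in>UNIV - {i}. c j *s s j)"
    using additive_range_compatible_family_map_local[OF K codim_K] by blast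
  define G where "G s = F s - (\<Sum>j\<in>UNIV - {i}. c j *s s j)" for s
  have G_add: "\<forall>s\<in>S. \<forall>t\<in>S. G (s + t) = G s + G t"
    using add by (simp add: G_def vec.scale_right_distrib sum.distrib algebra_simps)
  have G_vanish: "\<forall>s\<in>S. s i = 0 \<longrightarrow> G s = 0"
    using c by (simp add: G_def K_def)
  have G_rc: "\<forall>s\<in>S. G s \<in> vec.span (s ` UNIV)"
  proof
    fix s assume s: "s \<in> S"
    have "(\<Sum>j\<in>UNIV - {i}. c j *s s j) \<in> vec.span (range s)"
      by (intro vec.span_sum vec.span_scale vec.span_base) simp
    then show "G s \<in> vec.span (s ` UNIV)" using rc s by (simp add: G_def vec.span_diff)
  qed
  have "G s \<in> vec.span {s i}" if "s \<in> S" for s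
    using additive_value_in_span_eval[of S UNIV i, OF S _ _ _ G_add G_vanish G_rc that] codim_K
    by (simp add: K_def)
  then show ?thesis using c by (auto simp: G_def K_def)
qed

locale enumerated_basis =
  fixes \<beta> :: "'n::finite \<Rightarrow> 'k::field^'d"
  assumes inj: "inj \<beta>" and independent: "vec.independent (range \<beta>)"
    and spanning: "vec.span (range \<beta>) = UNIV"
begin

definition coords :: "('k^'d \<Rightarrow> 'k^'m) \<Rightarrow> 'n \<Rightarrow> 'k^'m" where
  "coords s = (\<lambda>i. s (\<beta> i))"

definition of_coords :: "('n \<Rightarrow> 'k^'m) \<Rightarrow> 'k^'d \<Rightarrow> 'k^'m" where
  "of_coords g = vec.construct (range \<beta>) (\<lambda>b. g (inv \<beta> b))"

lemma of_coords_in_Lin: "of_coords g \<in> Lin"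
  by (simp add: Lin_def of_coords_def vec.linear_construct[OF independent])

lemma coords_of_coords [simp]: "coords (of_coords g) = g"
  by (simp add: coords_def of_coords_def vec.construct_basis[OF independent] inv_f_f[OF inj])

lemma of_coords_coords:
  assumes "s \<in> Lin"
  shows "of_coords (coords s) = s"
proof
  fix v
  have "of_coords (coords s) b = s b" if "b \<in> range \<beta>" for b
    using that coords_of_coords[of "coords s"] by (auto simp: coords_def fun_eq_iff)
  moreover have "Vector_Spaces.linear (*s) (*s) (of_coords (coords s))" "Vector_Spaces.linear (*s) (*s) s"
    using of_coords_in_Lin assms by (simp_all add: Lin_def)
  ultimately show "of_coords (coords s) v = s v"
    using vec.linear_eq_on_span[of "of_coords (coords s)" s "range \<beta>" v] by (simp add: spanning)
qed

lemma of_coords_apply_basis: "of_coords g (\<beta> i) = g i"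
  using coords_of_coords[of g] by (simp add: coords_def fun_eq_iff)

lemma Lin_eq_range_of_coords: "Lin = range of_coords"
proof (intro equalityI subsetI)
  fix s :: "'k^'d \<Rightarrow> 'k^'m" assume "s \<in> Lin"
  then show "s \<in> range of_coords" by (metis of_coords_coords rangeI)
qed (auto simp: of_coords_in_Lin)

lemma of_coords_image_vimage: "S \<subseteq> Lin \<Longrightarrow> of_coords ` (of_coords -` S) = S"
  by (simp add: image_vimage_eq Int_absorb2 flip: Lin_eq_range_of_coords)

lemma of_coords_add: "of_coords (g + h) = of_coords g + of_coords h"
  by (simp add: of_coords_def fun_eq_iff vec.construct_add[OF independent])

lemma linear_of_coords: "Vector_Spaces.linear fscale fscale of_coords"
  by (simp add: Vector_Spaces.linear_iff funvs.vector_space_axioms fun_eq_iff fscale_def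
      of_coords_def vec.construct_add[OF independent] vec.construct_scale[OF independent])

lemma dim_of_coords_image: "funvs.dim (of_coords ` X) = funvs.dim X"
  by (rule family_fun.dim_image_eq[OF linear_of_coords]) (metis coords_of_coords inj_onI)

lemma range_eq_span_coords:
  assumes "s \<in> Lin"
  shows "range s = vec.span (range (coords s))"
proof -
  have "range s = s ` vec.span (range \<beta>)" by (simp add: spanning)
  also have "\<dots> = vec.span (range (coords s))"
    using vec.linear_span_image[of s "range \<beta>"] assms by (simp add: Lin_def coords_def image_image)
  finally show ?thesis .
qed

lemma apply_sum_basis:
  assumes "s \<in> Lin"
  shows "s (\<Sum>j\<in>J. c j *s \<beta> j) = (\<Sum>j\<in>J. c j *s coords s j)"
  using assms by (simp add: Lin_def coords_def vec.linear_sum vec.linear_scale)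

end

lemma exists_enumerated_basis:
  fixes x :: "'k::field^'n"
  assumes "x \<noteq> 0"
  obtains \<beta> :: "'n \<Rightarrow> 'k^'n" and i where "enumerated_basis \<beta>" "\<beta> i = x"
proof -
  define B where "B = vec.extend_basis {x}"
  have B: "x \<in> B" "vec.independent B" "vec.span B = UNIV"
    using assms vec.extend_basis_superset[of "{x}"] vec.independent_extend_basis[of "{x}"]
    by (auto simp: B_def)
  then have "card B = CARD('n)"
    using vec.basis_card_eq_dim[of B UNIV] by (simp add: vec_dim_card card_cart_basis)
  then obtain \<beta> :: "'n \<Rightarrow> 'k^'n" where \<beta>: "bij_betw \<beta> UNIV B"
    using finite_same_card_bij[of "UNIV :: 'n set" B] vec.finiteI_independent[OF B(2)] by auto
  then have "enumerated_basis \<beta>"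
    using B by unfold_locales (auto simp: bij_betw_def)
  moreover have "\<beta> (inv_into UNIV \<beta> x) = x"
    using \<beta> B(1) by (simp add: bij_betw_def f_inv_into_f)
  ultimately show ?thesis using that by blast
qed

section \<open>Maps that are local up to the evaluation at x\<close>

lemma exists_point_local_on_eval_kernel:
  fixes S :: "('k::field^'n \<Rightarrow> 'k^'m) set"
  assumes S: "S \<subseteq> Lin" "funvs.subspace S"
    and codim: "funvs.dim (Lin :: ('k^'n \<Rightarrow> 'k^'m) set) + 3 \<le> funvs.dim S + 2 * CARD('m)"
    and x: "x \<noteq> 0" and dim: "vec.dim (evalset S x) \<le> 1"
    and add: "\<forall>s\<in>S. \<forall>t\<in>S. F (s + t) = F s + F t" and rc: "range_compatible S F"
  shows "\<exists>y. \<forall>s\<in>S. (s x = 0 \<longrightarrow> F s = s y) \<and> F s - s y \<in> vec.span {s x}"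
proof -
  obtain \<beta> :: "'n \<Rightarrow> 'k^'n" and i where \<beta>: "enumerated_basis \<beta>" and \<beta>i: "\<beta> i = x"
    using exists_enumerated_basis[OF x] by blast
  interpret enumerated_basis \<beta> by (fact \<beta>)
  define S' :: "('n \<Rightarrow> 'k^'m) set" where "S' = of_coords -` S"
  have S_eq: "of_coords ` S' = S" unfolding S'_def by (rule of_coords_image_vimage[OF S(1)])
  have "funvs.dim (Lin :: ('k^'n \<Rightarrow> 'k^'m) set) = funvs.dim (UNIV :: ('n \<Rightarrow> 'k^'m) set)"
    using dim_of_coords_image[of UNIV] by (simp flip: Lin_eq_range_of_coords)
  moreover have "funvs.dim S = funvs.dim S'" using dim_of_coords_image[of S'] by (simp add: S_eq)
  ultimately have "funvs.dim (UNIV :: ('n \<Rightarrow> 'k^'m) set) + 3 \<le> funvs.dim S' + 2 * CARD('m)"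
    using codim by linarith
  moreover have "funvs.subspace S'"
    unfolding S'_def by (rule family_fun.linear_subspace_vimage[OF linear_of_coords S(2)])
  moreover have "(\<lambda>g. g i) ` S' = evalset S x"
    by (simp add: S_eq[symmetric] evalset_def image_image of_coords_apply_basis flip: \<beta>i)
  moreover have "\<forall>g\<in>S'. \<forall>h\<in>S'. F (of_coords (g + h)) = F (of_coords g) + F (of_coords h)"
    using add by (simp add: S'_def of_coords_add)
  moreover have "\<forall>g\<in>S'. F (of_coords g) \<in> vec.span (range g)"
  proof
    fix g assume "g \<in> S'"
    then have "F (of_coords g) \<in> range (of_coords g)"
      using rc by (simp add: S'_def range_compatible_def)
    then show "F (of_coords g) \<in> vec.span (range g)"
      using range_eq_span_coords[OF of_coords_in_Lin, of g] by simp
  qed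
  ultimately obtain c where c: "\<forall>g\<in>S'. (g i = 0 \<longrightarrow> F (of_coords g) = (\<Sum>j\<in>UNIV - {i}. c j *s g j))
      \<and> F (of_coords g) - (\<Sum>j\<in>UNIV - {i}. c j *s g j) \<in> vec.span {g i}"
    using exists_coefficients_local_on_eval_kernel[of S' i "\<lambda>g. F (of_coords g)"] dim by auto
  have "(s x = 0 \<longrightarrow> F s = s y) \<and> F s - s y \<in> vec.span {s x}"
    if s: "s \<in> S" and y: "y = (\<Sum>j\<in>UNIV - {i}. c j *s \<beta> j)" for s y
  proof -
    have sc: "of_coords (coords s) = s" using s S(1) of_coords_coords by blast
    then have "coords s \<in> S'" using s by (simp add: S'_def)
    then have "(coords s i = 0 \<longrightarrow> F s = (\<Sum>j\<in>UNIV - {i}. c j *s coords s j))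
        \<and> F s - (\<Sum>j\<in>UNIV - {i}. c j *s coords s j) \<in> vec.span {coords s i}"
      using c sc by metis
    moreover have "s y = (\<Sum>j\<in>UNIV - {i}. c j *s coords s j)"
      unfolding y using s S(1) by (intro apply_sum_basis) blast
    moreover have "coords s i = s x" by (simp add: coords_def \<beta>i)
    ultimately show ?thesis by simp
  qed
  then show ?thesis by blast
qed

lemma additive_eq_point_plus_evalset_hom:
  fixes S :: "('a \<Rightarrow> 'k::field^'m) set"
  assumes S: "funvs.subspace S" and add: "\<forall>s\<in>S. \<forall>t\<in>S. F (s + t) = F s + F t"
    and y: "\<forall>s\<in>S. (s x = 0 \<longrightarrow> F s = s y) \<and> F s - s y \<in> vec.span {s x}"
  shows "\<exists>\<alpha>. \<alpha> ` evalset S x \<subseteq> evalset S x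
    \<and> (\<forall>a\<in>evalset S x. \<forall>b\<in>evalset S x. \<alpha> (a + b) = \<alpha> a + \<alpha> b)
    \<and> (\<forall>s\<in>S. F s = s y + \<alpha> (s x))"
proof -
  define G where "G s = F s - s y" for s
  have G_add: "G (s + t) = G s + G t" if "s \<in> S" "t \<in> S" for s t
    using add that by (simp add: G_def algebra_simps)
  define \<alpha> where "\<alpha> a = G (SOME s. s \<in> S \<and> s x = a)" for a
  have \<alpha>: "\<alpha> (s x) = G s" if s: "s \<in> S" for s
  proof -
    define s' where "s' = (SOME t. t \<in> S \<and> t x = s x)"
    have s': "s' \<in> S" "s' x = s x"
      using someI[of "\<lambda>t. t \<in> S \<and> t x = s x" s] s unfolding s'_def by auto
    then have "s - s' \<in> S" "(s - s') x = 0" using funvs.subspace_diff[OF S s] by auto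
    then have "G s = G s'" using G_add[of "s - s'" s'] s'(1) y by (simp add: G_def)
    then show ?thesis by (simp add: \<alpha>_def s'_def)
  qed
  have "\<alpha> ` evalset S x \<subseteq> evalset S x"
  proof (clarsimp simp: evalset_def)
    fix s assume s: "s \<in> S"
    have "vec.span {s x} \<subseteq> evalset S x"
      using subspace_evalset[OF S] s by (intro vec.span_minimal) (auto simp: evalset_def)
    then show "\<alpha> (s x) \<in> (\<lambda>s. s x) ` S" using y s \<alpha>[OF s] by (auto simp: G_def evalset_def)
  qed
  moreover have "\<alpha> (a + b) = \<alpha> a + \<alpha> b" if ab: "a \<in> evalset S x" "b \<in> evalset S x" for a b
  proof -
    obtain s t where st: "s \<in> S" "t \<in> S" "a = s x" "b = t x"
      using ab by (auto simp: evalset_def)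
    then have "\<alpha> (a + b) = G (s + t)" using \<alpha>[of "s + t"] funvs.subspace_add[OF S] by simp
    then show ?thesis using G_add st \<alpha> by simp
  qed
  moreover have "F s = s y + \<alpha> (s x)" if "s \<in> S" for s
    using \<alpha>[OF that] by (simp add: G_def)
  ultimately show ?thesis by blast
qed

lemma local_if_homogeneous:
  fixes S :: "('k::field^'n \<Rightarrow> 'k^'m) set"
  assumes S: "S \<subseteq> Lin" "funvs.subspace S" and dim: "vec.dim (evalset S x) \<le> 1"
    and add: "\<forall>s\<in>S. \<forall>t\<in>S. F (s + t) = F s + F t"
    and hom: "\<forall>s\<in>S. \<forall>c. F (fscale c s) = c *s F s"
    and y: "\<forall>s\<in>S. (s x = 0 \<longrightarrow> F s = s y) \<and> F s - s y \<in> vec.span {s x}"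
  shows "is_local S F"
proof (cases "evalset S x = {0}")
  case True
  then show ?thesis using y by (auto simp: is_local_def evalset_def)
next
  case False
  then obtain s0 where s0: "s0 \<in> S" "s0 x \<noteq> 0"
    using subspace_evalset[OF S(2)] vec.subspace_0 by (auto simp: evalset_def)
  have "vec.span {s0 x} \<subseteq> evalset S x"
    using subspace_evalset[OF S(2)] s0(1) by (intro vec.span_minimal) (auto simp: evalset_def)
  moreover have "vec.dim (evalset S x) \<le> vec.dim (vec.span {s0 x})" using dim s0(2) by simp
  ultimately have line: "vec.span {s0 x} = evalset S x"
    by (rule vec.subspace_dim_equal[OF vec.subspace_span subspace_evalset[OF S(2)]])
  obtain \<mu> where \<mu>: "F s0 - s0 y = \<mu> *s s0 x"
    using y s0(1) by (auto simp: vec.span_singleton)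
  have "F s = s (y + \<mu> *s x)" if s: "s \<in> S" for s
  proof -
    obtain k where k: "s x = k *s s0 x"
      using line[symmetric] s by (auto simp: evalset_def vec.span_singleton)
    define t where "t = s - fscale k s0"
    have t: "t \<in> S" "t x = 0"
      using funvs.subspace_diff[OF S(2) s funvs.subspace_scale[OF S(2) s0(1)]] k
      by (simp_all add: t_def fscale_def)
    have "F s = F (t + fscale k s0)" by (simp add: t_def)
    also have "\<dots> = F t + k *s F s0"
      using add t(1) funvs.subspace_scale[OF S(2) s0(1)] hom s0(1) by simp
    also have "\<dots> = s y + \<mu> *s s x"
      using y t s0 \<mu> k by (simp add: t_def fscale_def algebra_simps vec.scale_right_diff_distrib
          vector_smult_assoc mult.commute)
    also have "\<dots> = s (y + \<mu> *s x)"
    proof -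
      have "Vector_Spaces.linear (*s) (*s) s" using s S(1) by (auto simp: Lin_def)
      then show ?thesis by (simp add: vec.linear_add vec.linear_scale)
    qed
    finally show ?thesis .
  qed
  then show ?thesis by (auto simp: is_local_def)
qed

theorem proposition2p9:
  fixes S :: "('k::field^'n \<Rightarrow> 'k^'m) set"
    and F :: "('k^'n \<Rightarrow> 'k^'m) \<Rightarrow> 'k^'m"
    and x :: "'k^'n"
  assumes S_sub: "S \<subseteq> Lin"
    and S_subspace: "funvs.subspace S"
    and codim: "int (funvs.dim (Lin :: ('k^'n \<Rightarrow> 'k^'m) set)) - int (funvs.dim S)
                  \<le> 2 * int (vec.dim (UNIV :: ('k^'m) set)) - 3"
    and x_nz: "x \<noteq> 0"
    and dim_Sx: "vec.dim (evalset S x) \<le> 1"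
    and F_hom: "\<forall>s\<in>S. \<forall>t\<in>S. F (s + t) = F s + F t"
    and F_rc: "range_compatible S F"
  shows "(evalset S x = {0} \<longrightarrow> is_local S F)
       \<and> (evalset S x \<noteq> {0} \<longrightarrow>
            (\<exists>y \<alpha>. \<alpha> ` evalset S x \<subseteq> evalset S x
                 \<and> (\<forall>a\<in>evalset S x. \<forall>b\<in>evalset S x. \<alpha> (a + b) = \<alpha> a + \<alpha> b)
                 \<and> (\<forall>s\<in>S. F s = s y + \<alpha> (s x))))
       \<and> ((\<forall>s\<in>S. \<forall>c. F (fscale c s) = c *s F s) \<longrightarrow> is_local S F)"
proof -
  have "funvs.dim (Lin :: ('k^'n \<Rightarrow> 'k^'m) set) + 3 \<le> funvs.dim S + 2 * CARD('m)"
    using codim by (simp add: vec_dim_card card_cart_basis)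
  then obtain y where y: "\<forall>s\<in>S. (s x = 0 \<longrightarrow> F s = s y) \<and> F s - s y \<in> vec.span {s x}"
    using exists_point_local_on_eval_kernel[OF S_sub S_subspace _ x_nz dim_Sx F_hom F_rc] by blast
  have "evalset S x = {0} \<longrightarrow> is_local S F"
    using y by (auto simp: is_local_def evalset_def)
  moreover have "\<exists>y \<alpha>. \<alpha> ` evalset S x \<subseteq> evalset S x
      \<and> (\<forall>a\<in>evalset S x. \<forall>b\<in>evalset S x. \<alpha> (a + b) = \<alpha> a + \<alpha> b)
      \<and> (\<forall>s\<in>S. F s = s y + \<alpha> (s x))"
    using additive_eq_point_plus_evalset_hom[OF S_subspace F_hom y] by blast
  moreover have "(\<forall>s\<in>S. \<forall>c. F (fscale c s) = c *s F s) \<longrightarrow> is_local S F"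
    using local_if_homogeneous[OF S_sub S_subspace dim_Sx F_hom _ y] by blast
  ultimately show ?thesis by blast
qed

end
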